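(* Assume the setup of the context with $F$ formally real, and let $B$ be a $\ast$-symmetric basis of $H$. Then for every $\lambda\in\Lambda$: (a) $\chi_\lambda(h)=\chi_\lambda(h^\ast)$ for all $h\in H$; (b) $\nu(\chi_\lambda(x))\ge-a_\lambda$ for all $x\in B$, with equality for at least one $x\in B$.
   Context: Setup: $\Gamma$ totally ordered abelian group; $K$ a field with surjective valuation $\nu:K\to\Gamma\cup\{\infty\}$, valuation ring $\mathcal{O}$, maximal ideal $\mathfrak m$, formally real residue field $F=\mathcal{O}/\mathfrak m$. $H$ a finite-dimensional split semisimple symmetric $K$-algebra with trace form $\tau$; simple modules indexed by $\Lambda$, characters $\chi_\lambda$, Schur elements $c_\lambda$ with $\tau=\sum_\lambda c_\lambda^{-1}\chi_\lambda$; $a_\lambda:=-\tfrac12\nu(c_\lambda)$. $\ast$ is a $K$-linear involutive antiautomorphism of $H$; a $\ast$-symmetric basis is a basis $B$ with $B^\ast=B$ and $\tau(bc^\ast)=\delta_{bc}$. *)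

theory Defs
  imports Main "Jordan_Normal_Form.Matrix"
begin

text \<open>A (Krull) valuation nu : K -> Gamma u {infinity}, surjective onto Gamma.
  Only the values on nonzero elements matter (nu 0 = infinity is implicit).\<close>
definition is_surj_valuation :: "('k::field \<Rightarrow> 'g::linordered_ab_group_add) \<Rightarrow> bool" where
  "is_surj_valuation \<nu> \<longleftrightarrow>
     (\<forall>x y. x \<noteq> 0 \<longrightarrow> y \<noteq> 0 \<longrightarrow> \<nu> (x * y) = \<nu> x + \<nu> y) \<and>
     (\<forall>x y. x \<noteq> 0 \<longrightarrow> y \<noteq> 0 \<longrightarrow> x + y \<noteq> 0 \<longrightarrow> min (\<nu> x) (\<nu> y) \<le> \<nu> (x + y)) \<and>
     (\<forall>g. \<exists>x. x \<noteq> 0 \<and> \<nu> x = g)"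

definition val_ring :: "('k::field \<Rightarrow> 'g::linordered_ab_group_add) \<Rightarrow> 'k set" where
  "val_ring \<nu> = {x. x = 0 \<or> 0 \<le> \<nu> x}"

definition val_max_ideal :: "('k::field \<Rightarrow> 'g::linordered_ab_group_add) \<Rightarrow> 'k set" where
  "val_max_ideal \<nu> = {x. x = 0 \<or> 0 < \<nu> x}"

text \<open>The residue field O/m is formally real: -1 is not a sum of squares in O/m,
  i.e. no sum 1 + a_1^2 + ... + a_n^2 with all a_i in O lies in m.\<close>
definition formally_real_residue :: "('k::field \<Rightarrow> 'g::linordered_ab_group_add) \<Rightarrow> bool" where
  "formally_real_residue \<nu> \<longleftrightarrow>
     (\<forall>xs. set xs \<subseteq> val_ring \<nu> \<longrightarrow> 1 + sum_list (map (\<lambda>a. a ^ 2) xs) \<notin> val_max_ideal \<nu>)"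

definition is_algebra :: "('k::field \<Rightarrow> 'h::ring_1 \<Rightarrow> 'h) \<Rightarrow> bool" where
  "is_algebra sc \<longleftrightarrow> Vector_Spaces.vector_space sc \<and>
     (\<forall>k a b. sc k (a * b) = sc k a * b \<and> sc k (a * b) = a * sc k b)"

definition is_basis :: "('k::field \<Rightarrow> 'h::ring_1 \<Rightarrow> 'h) \<Rightarrow> 'h set \<Rightarrow> bool" where
  "is_basis sc B \<longleftrightarrow> finite B \<and> \<not> module.dependent sc B \<and> module.span sc B = UNIV"

text \<open>Split semisimple: the irreducible representations rho_lambda : H -> M_{d_lambda}(K),
  lambda in Lambda, are algebra homomorphisms which jointly give an algebra isomorphism
  H ~ prod_lambda M_{d_lambda}(K) (Wedderburn decomposition).\<close>
definition split_semisimple_reps ::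
  "('k::field \<Rightarrow> 'h::ring_1 \<Rightarrow> 'h) \<Rightarrow> 'l set \<Rightarrow> ('l \<Rightarrow> nat) \<Rightarrow> ('l \<Rightarrow> 'h \<Rightarrow> 'k mat) \<Rightarrow> bool" where
  "split_semisimple_reps sc \<Lambda> d \<rho> \<longleftrightarrow>
     finite \<Lambda> \<and>
     (\<forall>j\<in>\<Lambda>. 0 < d j \<and>
        (\<forall>h. \<rho> j h \<in> carrier_mat (d j) (d j)) \<and>
        (\<forall>a b. \<rho> j (a + b) = \<rho> j a + \<rho> j b) \<and>
        (\<forall>k a. \<rho> j (sc k a) = k \<cdot>\<^sub>m \<rho> j a) \<and>
        (\<forall>a b. \<rho> j (a * b) = \<rho> j a * \<rho> j b) \<and>
        \<rho> j 1 = 1\<^sub>m (d j)) \<and>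
     (\<forall>M. (\<forall>j\<in>\<Lambda>. M j \<in> carrier_mat (d j) (d j)) \<longrightarrow>
          (\<exists>!h. \<forall>j\<in>\<Lambda>. \<rho> j h = M j))"

definition mat_trace :: "'a::comm_ring_1 mat \<Rightarrow> 'a" where
  "mat_trace A = (\<Sum>i<dim_row A. A $$ (i, i))"

definition character :: "('l \<Rightarrow> 'h \<Rightarrow> 'k::field mat) \<Rightarrow> 'l \<Rightarrow> 'h \<Rightarrow> 'k" where
  "character \<rho> j h = mat_trace (\<rho> j h)"

definition symmetrizing_trace :: "('k::field \<Rightarrow> 'h::ring_1 \<Rightarrow> 'h) \<Rightarrow> ('h \<Rightarrow> 'k) \<Rightarrow> bool" where
  "symmetrizing_trace sc \<tau> \<longleftrightarrow>
     (\<forall>a b. \<tau> (a + b) = \<tau> a + \<tau> b) \<and> (\<forall>k a. \<tau> (sc k a) = k * \<tau> a) \<and>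
     (\<forall>a b. \<tau> (a * b) = \<tau> (b * a)) \<and>
     (\<forall>a. (\<forall>b. \<tau> (a * b) = 0) \<longrightarrow> a = 0)"

definition schur_elements ::
  "'l set \<Rightarrow> ('l \<Rightarrow> 'h \<Rightarrow> 'k::field mat) \<Rightarrow> ('h \<Rightarrow> 'k) \<Rightarrow> ('l \<Rightarrow> 'k) \<Rightarrow> bool" where
  "schur_elements \<Lambda> \<rho> \<tau> c \<longleftrightarrow>
     (\<forall>j\<in>\<Lambda>. c j \<noteq> 0) \<and> (\<forall>h. \<tau> h = (\<Sum>j\<in>\<Lambda>. inverse (c j) * character \<rho> j h))"

definition linear_involutive_antiaut :: "('k::field \<Rightarrow> 'h::ring_1 \<Rightarrow> 'h) \<Rightarrow> ('h \<Rightarrow> 'h) \<Rightarrow> bool" where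
  "linear_involutive_antiaut sc st \<longleftrightarrow>
     (\<forall>a b. st (a + b) = st a + st b) \<and> (\<forall>k a. st (sc k a) = sc k (st a)) \<and>
     (\<forall>a b. st (a * b) = st b * st a) \<and> (\<forall>a. st (st a) = a)"

definition star_symmetric_basis ::
  "('k::field \<Rightarrow> 'h::ring_1 \<Rightarrow> 'h) \<Rightarrow> ('h \<Rightarrow> 'k) \<Rightarrow> ('h \<Rightarrow> 'h) \<Rightarrow> 'h set \<Rightarrow> bool" where
  "star_symmetric_basis sc \<tau> st B \<longleftrightarrow>
     is_basis sc B \<and> st ` B = B \<and>
     (\<forall>b\<in>B. \<forall>c\<in>B. \<tau> (b * st c) = (if b = c then 1 else 0))"

end

theory Submission
  imports Defs
begin

text \<open>Expanding in the \<open>\<ast>\<close>-symmetric basis \<open>B\<close> gives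
  \<open>\<tau>(h h\<^sup>\<ast>) = \<Sum>\<^sub>v \<tau>(h v\<^sup>\<ast>)\<^sup>2\<close>. Since the residue field is formally real, a sum of squares has
  the doubled valuation of its smallest term; in particular \<open>\<tau>(h h\<^sup>\<ast>) = 0\<close> forces \<open>h = 0\<close>.
  This anisotropy makes every central idempotent \<open>\<ast>\<close>-invariant, in particular the block
  idempotent \<open>e\<^sub>\<lambda>\<close>; as \<open>\<chi>\<^sub>\<lambda>(h) = c\<^sub>\<lambda> \<tau>(e\<^sub>\<lambda> h)\<close> and \<open>\<tau>\<close> is \<open>\<ast>\<close>-invariant, (a) follows.
  Expanding \<open>e\<^sub>\<lambda>\<close> in \<open>B\<close> and applying \<open>\<chi>\<^sub>\<lambda>\<close> yields
  \<open>\<Sum>\<^sub>x\<in>\<^sub>B \<chi>\<^sub>\<lambda>(x)\<^sup>2 = d\<^sub>\<lambda> c\<^sub>\<lambda>\<close>, and \<open>\<nu>(d\<^sub>\<lambda>) = 0\<close>, which gives (b).\<close>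

lemma additive_sum:
  fixes f :: "'a::comm_monoid_add \<Rightarrow> 'b::ab_group_add"
  assumes "\<forall>a b. f (a + b) = f a + f b"
  shows "f (sum g S) = (\<Sum>s\<in>S. f (g s))"
proof -
  have "f 0 = f 0 + f 0" using assms by (metis add_0)
  then have "f 0 = 0" by simp
  then show ?thesis
    by (induction S rule: infinite_finite_induct) (auto simp: assms)
qed

lemma ex_nonzero_min_valuation:
  fixes f :: "'a \<Rightarrow> 'k::zero" and \<nu> :: "'k \<Rightarrow> 'g::linorder"
  assumes "finite S" "\<exists>s\<in>S. f s \<noteq> 0"
  shows "\<exists>s0\<in>S. f s0 \<noteq> 0 \<and> (\<forall>s\<in>S. f s \<noteq> 0 \<longrightarrow> \<nu> (f s0) \<le> \<nu> (f s))"
proof -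
  have "finite (\<nu> ` f ` {s\<in>S. f s \<noteq> 0})" "\<nu> ` f ` {s\<in>S. f s \<noteq> 0} \<noteq> {}"
    using assms by auto
  from ex_min_if_finite[OF this] obtain s0 where "s0 \<in> S" "f s0 \<noteq> 0"
    "\<not> (\<exists>x\<in>\<nu> ` f ` {s\<in>S. f s \<noteq> 0}. x < \<nu> (f s0))" by auto
  then show ?thesis by (auto simp: not_less)
qed

locale formally_real_valuation =
  fixes \<nu> :: "'k::field \<Rightarrow> 'g::linordered_ab_group_add"
  assumes valuation: "is_surj_valuation \<nu>"
    and formally_real: "formally_real_residue \<nu>"
begin

lemma valuation_mult: "x \<noteq> 0 \<Longrightarrow> y \<noteq> 0 \<Longrightarrow> \<nu> (x * y) = \<nu> x + \<nu> y"
  using valuation unfolding is_surj_valuation_def by auto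

lemma valuation_one: "\<nu> 1 = 0"
  using valuation_mult[of 1 1] by simp

lemma val_ring_add:
  assumes "x \<in> val_ring \<nu>" "y \<in> val_ring \<nu>"
  shows "x + y \<in> val_ring \<nu>"
proof (cases "x = 0 \<or> y = 0 \<or> x + y = 0")
  case False
  then have "min (\<nu> x) (\<nu> y) \<le> \<nu> (x + y)"
    using valuation unfolding is_surj_valuation_def by auto
  moreover have "0 \<le> min (\<nu> x) (\<nu> y)" using assms False by (auto simp: val_ring_def)
  ultimately show ?thesis unfolding val_ring_def using order_trans by blast
qed (use assms in \<open>auto simp: val_ring_def\<close>)

lemma val_ring_mult: "x \<in> val_ring \<nu> \<Longrightarrow> y \<in> val_ring \<nu> \<Longrightarrow> x * y \<in> val_ring \<nu>"
  by (cases "x = 0 \<or> y = 0") (auto simp: val_ring_def valuation_mult)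

lemma val_ring_sum: "(\<And>s. s \<in> S \<Longrightarrow> f s \<in> val_ring \<nu>) \<Longrightarrow> sum f S \<in> val_ring \<nu>"
proof (induction S rule: infinite_finite_induct)
  case (insert x F)
  then show ?case by (simp add: val_ring_add)
qed (simp_all add: val_ring_def)

text \<open>Dividing by the term of least valuation turns the sum into \<open>1 + \<Sum> a\<^sub>i\<^sup>2\<close> with
  \<open>a\<^sub>i \<in> \<O>\<close>, a unit of \<open>\<O>\<close> because the residue field is formally real.\<close>
lemma sum_squares_valuation:
  assumes "finite S" "s0 \<in> S" "f s0 \<noteq> 0"
    and min: "\<forall>s\<in>S. f s \<noteq> 0 \<longrightarrow> \<nu> (f s0) \<le> \<nu> (f s)"
  shows "(\<Sum>s\<in>S. f s ^ 2) \<noteq> 0 \<and> \<nu> (\<Sum>s\<in>S. f s ^ 2) = \<nu> (f s0) + \<nu> (f s0)"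
proof -
  define t where "t = f s0"
  define g where "g s = f s / t" for s
  have t: "t \<noteq> 0" using assms t_def by simp
  have g_val_ring: "g s \<in> val_ring \<nu>" if "s \<in> S" for s
  proof (cases "f s = 0")
    case False
    then have "g s \<noteq> 0" "\<nu> (f s) = \<nu> (g s) + \<nu> t"
      using valuation_mult[of "g s" t] t by (auto simp: g_def)
    moreover have "\<nu> t \<le> \<nu> (f s)" using min that False t_def by auto
    ultimately show ?thesis by (simp add: val_ring_def)
  qed (simp add: g_def val_ring_def)
  obtain xs where xs: "set xs = S - {s0}" "distinct xs"
    using finite_distinct_list assms(1) by (meson finite_Diff)
  have "(\<Sum>s\<in>S. g s ^ 2) = g s0 ^ 2 + (\<Sum>s\<in>S - {s0}. g s ^ 2)"
    using assms by (simp add: sum.remove)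
  also have "(\<Sum>s\<in>S - {s0}. g s ^ 2) = sum_list (map (\<lambda>a. a ^ 2) (map g xs))"
    using xs by (simp add: sum_list_distinct_conv_sum_set comp_def)
  finally have "(\<Sum>s\<in>S. g s ^ 2) = 1 + sum_list (map (\<lambda>a. a ^ 2) (map g xs))"
    using t by (simp add: g_def t_def)
  moreover have "set (map g xs) \<subseteq> val_ring \<nu>" using xs g_val_ring by auto
  ultimately have "(\<Sum>s\<in>S. g s ^ 2) \<notin> val_max_ideal \<nu>"
    using formally_real unfolding formally_real_residue_def by metis
  moreover have "(\<Sum>s\<in>S. g s ^ 2) \<in> val_ring \<nu>"
    by (intro val_ring_sum) (simp add: power2_eq_square val_ring_mult g_val_ring)
  ultimately have g_sum: "(\<Sum>s\<in>S. g s ^ 2) \<noteq> 0" "\<nu> (\<Sum>s\<in>S. g s ^ 2) = 0"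
    by (auto simp: val_max_ideal_def val_ring_def)
  have "(\<Sum>s\<in>S. f s ^ 2) = (t * t) * (\<Sum>s\<in>S. g s ^ 2)"
    unfolding sum_distrib_left using t by (intro sum.cong) (auto simp: g_def power2_eq_square)
  then show ?thesis
    using g_sum t valuation_mult[of "t * t"] valuation_mult[of t t] by (simp add: t_def)
qed

lemma sum_squares_valuation_min:
  assumes "finite S" "\<exists>s\<in>S. f s \<noteq> 0"
  shows "(\<Sum>s\<in>S. f s ^ 2) \<noteq> 0"
    and "\<forall>s\<in>S. f s \<noteq> 0 \<longrightarrow> \<nu> (\<Sum>s\<in>S. f s ^ 2) \<le> \<nu> (f s) + \<nu> (f s)"
    and "\<exists>s\<in>S. f s \<noteq> 0 \<and> \<nu> (f s) + \<nu> (f s) = \<nu> (\<Sum>s\<in>S. f s ^ 2)"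
proof -
  obtain s0 where s0: "s0 \<in> S" "f s0 \<noteq> 0" "\<forall>s\<in>S. f s \<noteq> 0 \<longrightarrow> \<nu> (f s0) \<le> \<nu> (f s)"
    using ex_nonzero_min_valuation[OF assms] by blast
  note sum = sum_squares_valuation[OF assms(1) s0]
  show "(\<Sum>s\<in>S. f s ^ 2) \<noteq> 0" using sum by blast
  show "\<forall>s\<in>S. f s \<noteq> 0 \<longrightarrow> \<nu> (\<Sum>s\<in>S. f s ^ 2) \<le> \<nu> (f s) + \<nu> (f s)"
    using sum s0(3) by (simp add: add_mono)
  show "\<exists>s\<in>S. f s \<noteq> 0 \<and> \<nu> (f s) + \<nu> (f s) = \<nu> (\<Sum>s\<in>S. f s ^ 2)"
    using sum s0 by auto
qed

lemma of_nat_valuation: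
  assumes "0 < n"
  shows "(of_nat n :: 'k) \<noteq> 0" and "\<nu> (of_nat n) = 0"
proof -
  have "(\<Sum>s<n. (1::'k) ^ 2) \<noteq> 0 \<and> \<nu> (\<Sum>s<n. (1::'k) ^ 2) = \<nu> 1 + \<nu> 1"
    using sum_squares_valuation[of "{..<n}" 0 "\<lambda>_. 1"] assms by auto
  then show "(of_nat n :: 'k) \<noteq> 0" "\<nu> (of_nat n) = 0"
    by (simp_all add: valuation_one)
qed

end

locale star_symmetric_algebra =
  fixes sc :: "'k::field \<Rightarrow> 'h::ring_1 \<Rightarrow> 'h" and \<tau> :: "'h \<Rightarrow> 'k"
    and st :: "'h \<Rightarrow> 'h" and B :: "'h set"
  assumes algebra: "is_algebra sc"
    and trace: "symmetrizing_trace sc \<tau>"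
    and star: "linear_involutive_antiaut sc st"
    and basis: "star_symmetric_basis sc \<tau> st B"
begin

lemma module: "Modules.module sc"
  and scale_mult_left: "sc k (a * b) = sc k a * b"
  and scale_mult_right: "sc k (a * b) = a * sc k b"
  using algebra unfolding is_algebra_def module_iff_vector_space by blast+

lemma trace_add: "\<forall>a b. \<tau> (a + b) = \<tau> a + \<tau> b"
  and trace_scale: "\<tau> (sc k a) = k * \<tau> a"
  and trace_commute: "\<tau> (a * b) = \<tau> (b * a)"
  using trace unfolding symmetrizing_trace_def by auto

lemma star_add: "\<forall>a b. st (a + b) = st a + st b"
  and star_scale: "st (sc k a) = sc k (st a)"
  and star_mult: "st (a * b) = st b * st a"
  and star_star: "st (st a) = a"
  using star unfolding linear_involutive_antiaut_def by auto

lemma finite_basis: "finite B"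
  and span_basis: "module.span sc B = UNIV"
  and trace_basis: "b \<in> B \<Longrightarrow> b' \<in> B \<Longrightarrow> \<tau> (b * st b') = (if b = b' then 1 else 0)"
  using basis unfolding star_symmetric_basis_def is_basis_def by auto

lemma trace_sum: "\<tau> (sum g S) = (\<Sum>s\<in>S. \<tau> (g s))"
  using additive_sum[OF trace_add] .

lemma star_sum: "st (sum g S) = (\<Sum>s\<in>S. st (g s))"
  using additive_sum[OF star_add] .

lemma trace_zero: "\<tau> 0 = 0"
  using trace_sum[of id "{}"] by simp

lemma star_one: "st 1 = 1"
  using star_mult[of "st 1" 1] by (simp add: star_star)

lemma star_diff: "st (a - b) = st a - st b"
  using star_add by (metis add_diff_cancel eq_diff_eq)

lemma basis_expansion: "h = (\<Sum>v\<in>B. sc (\<tau> (h * st v)) v)"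
proof -
  obtain u where h: "h = (\<Sum>v\<in>B. sc (u v) v)"
    using Modules.module.span_finite[OF module finite_basis] span_basis by auto
  have "\<tau> (h * st w) = u w" if "w \<in> B" for w
  proof -
    have "\<tau> (h * st w) = (\<Sum>v\<in>B. \<tau> (sc (u v) (v * st w)))"
      unfolding h sum_distrib_right scale_mult_left by (rule trace_sum)
    also have "\<dots> = (\<Sum>v\<in>B. if v = w then u v else 0)"
      using trace_basis that by (intro sum.cong) (auto simp: trace_scale)
    finally show ?thesis using that finite_basis by simp
  qed
  then have "(\<Sum>v\<in>B. sc (\<tau> (h * st v)) v) = (\<Sum>v\<in>B. sc (u v) v)"
    by (intro sum.cong) simp_all
  then show ?thesis using h by simp
qed

lemma trace_mult_star_expansion: "\<tau> (x * st y) = (\<Sum>v\<in>B. \<tau> (x * st v) * \<tau> (y * st v))"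
proof -
  have "st y = (\<Sum>v\<in>B. sc (\<tau> (y * st v)) (st v))"
    by (subst basis_expansion[of y]) (simp add: star_sum star_scale)
  then have "x * st y = (\<Sum>v\<in>B. sc (\<tau> (y * st v)) (x * st v))"
    by (simp add: sum_distrib_left scale_mult_right)
  then show ?thesis by (simp add: trace_sum trace_scale mult.commute)
qed

lemma trace_mult_star_self: "\<tau> (h * st h) = (\<Sum>v\<in>B. \<tau> (h * st v) ^ 2)"
  by (subst trace_mult_star_expansion) (simp add: power2_eq_square)

lemma trace_star: "\<tau> (st h) = \<tau> h"
  using trace_mult_star_expansion[of h 1] trace_mult_star_expansion[of 1 h]
  by (simp add: star_one mult.commute)

lemma ex_nonzero_coordinate:
  assumes "h \<noteq> 0"
  shows "\<exists>v\<in>B. \<tau> (h * st v) \<noteq> 0"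
proof (rule ccontr)
  assume "\<not> ?thesis"
  then have "h = (\<Sum>v\<in>B. sc 0 v)" using basis_expansion[of h] by simp
  then show False using assms by (simp add: Modules.module.scale_zero_left[OF module])
qed

text \<open>With \<open>z = e\<^sup>\<ast>\<close>, the element \<open>u = e(1 - z)\<close> satisfies
  \<open>u u\<^sup>\<ast> = e(1 - e)(1 - z)z = 0\<close>, so \<open>e = ez\<close>; symmetrically \<open>z = ze\<close>.\<close>
lemma star_central_idempotent:
  assumes anisotropic: "\<And>h. \<tau> (h * st h) = 0 \<Longrightarrow> h = 0"
    and central: "\<And>h. e * h = h * e" and idem: "e * e = e"
  shows "st e = e"
proof -
  define z where "z = st e"
  have e_compl: "e * (1 - e) = 0" "(1 - e) * e = 0"
    using idem by (simp_all add: algebra_simps)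
  have "z * z = z" using idem star_mult by (metis z_def)
  then have z_compl: "(1 - z) * z = 0"
    by (simp add: algebra_simps)
  have st_z: "st z = e" by (simp add: z_def star_star)
  have "e * (1 - z) = 0"
  proof (rule anisotropic)
    have "st (e * (1 - z)) = (1 - e) * z" by (simp add: star_mult star_diff star_one st_z z_def star_star)
    then have "e * (1 - z) * st (e * (1 - z)) = e * ((1 - z) * (1 - e)) * z"
      by (simp add: mult.assoc)
    also have "(1 - z) * (1 - e) = (1 - e) * (1 - z)"
      by (simp add: algebra_simps central)
    also have "e * ((1 - e) * (1 - z)) * z = (e * (1 - e)) * ((1 - z) * z)"
      by (simp add: mult.assoc)
    finally show "\<tau> (e * (1 - z) * st (e * (1 - z))) = 0" using e_compl trace_zero by simp
  qed
  moreover have "z * (1 - e) = 0"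
  proof (rule anisotropic)
    have "st (z * (1 - e)) = (1 - z) * e" by (simp add: star_mult star_diff star_one z_def star_star)
    then have "z * (1 - e) * st (z * (1 - e)) = z * (1 - e) * (e * (1 - z))"
      by (simp add: central)
    also have "\<dots> = z * ((1 - e) * e) * (1 - z)"
      by (simp add: mult.assoc)
    finally show "\<tau> (z * (1 - e) * st (z * (1 - e))) = 0" using e_compl trace_zero by simp
  qed
  ultimately have "e = e * z" "z = z * e" by (simp_all add: algebra_simps)
  then show ?thesis using central z_def by metis
qed

end

lemma (in formally_real_valuation) star_symmetric_algebra_anisotropic:
  fixes \<tau> :: "'h::ring_1 \<Rightarrow> 'k"
  assumes "star_symmetric_algebra sc \<tau> st B" and "\<tau> (h * st h) = 0"
  shows "h = 0"
proof (rule ccontr)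
  interpret star_symmetric_algebra sc \<tau> st B by fact
  assume "h \<noteq> 0"
  then have "(\<Sum>v\<in>B. \<tau> (h * st v) ^ 2) \<noteq> 0"
    using sum_squares_valuation_min(1)[OF finite_basis ex_nonzero_coordinate] by simp
  then show False using assms(2) trace_mult_star_self by simp
qed

locale schur_algebra = star_symmetric_algebra sc \<tau> st B
  for sc :: "'k::field \<Rightarrow> 'h::ring_1 \<Rightarrow> 'h" and \<tau> st B +
  fixes \<Lambda> :: "'l set" and d :: "'l \<Rightarrow> nat" and \<rho> :: "'l \<Rightarrow> 'h \<Rightarrow> 'k mat" and c :: "'l \<Rightarrow> 'k"
  assumes reps: "split_semisimple_reps sc \<Lambda> d \<rho>"
    and schur: "schur_elements \<Lambda> \<rho> \<tau> c"
begin

lemma finite_reps: "finite \<Lambda>"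
  and dim_pos: "j \<in> \<Lambda> \<Longrightarrow> 0 < d j"
  and rep_carrier: "j \<in> \<Lambda> \<Longrightarrow> \<rho> j h \<in> carrier_mat (d j) (d j)"
  and rep_add: "j \<in> \<Lambda> \<Longrightarrow> \<rho> j (a + b) = \<rho> j a + \<rho> j b"
  and rep_scale: "j \<in> \<Lambda> \<Longrightarrow> \<rho> j (sc k a) = k \<cdot>\<^sub>m \<rho> j a"
  and rep_mult: "j \<in> \<Lambda> \<Longrightarrow> \<rho> j (a * b) = \<rho> j a * \<rho> j b"
  and reps_unique: "(\<forall>j\<in>\<Lambda>. M j \<in> carrier_mat (d j) (d j)) \<Longrightarrow> \<exists>!h. \<forall>j\<in>\<Lambda>. \<rho> j h = M j"
  using reps unfolding split_semisimple_reps_def by auto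

lemma schur_nonzero: "j \<in> \<Lambda> \<Longrightarrow> c j \<noteq> 0"
  and trace_schur: "\<tau> h = (\<Sum>i\<in>\<Lambda>. inverse (c i) * character \<rho> i h)"
  using schur unfolding schur_elements_def by auto

lemma reps_eqI: "(\<And>i. i \<in> \<Lambda> \<Longrightarrow> \<rho> i x = \<rho> i y) \<Longrightarrow> x = y"
  using reps_unique[of "\<lambda>i. \<rho> i y"] rep_carrier by metis

lemma character_add: "j \<in> \<Lambda> \<Longrightarrow> character \<rho> j (a + b) = character \<rho> j a + character \<rho> j b"
  using rep_carrier[of j a] rep_carrier[of j b]
  by (simp add: character_def mat_trace_def rep_add sum.distrib)

lemma character_scale: "j \<in> \<Lambda> \<Longrightarrow> character \<rho> j (sc k a) = k * character \<rho> j a"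
  using rep_carrier[of j a]
  by (simp add: character_def mat_trace_def rep_scale sum_distrib_left)

lemma character_sum: "j \<in> \<Lambda> \<Longrightarrow> character \<rho> j (sum g S) = (\<Sum>s\<in>S. character \<rho> j (g s))"
  using additive_sum[of "character \<rho> j"] character_add by blast

definition block_idempotent :: "'l \<Rightarrow> 'h" where
  "block_idempotent j = (THE e. \<forall>i\<in>\<Lambda>. \<rho> i e = (if i = j then 1\<^sub>m (d i) else 0\<^sub>m (d i) (d i)))"

lemma rep_block_idempotent:
  "i \<in> \<Lambda> \<Longrightarrow> \<rho> i (block_idempotent j) = (if i = j then 1\<^sub>m (d i) else 0\<^sub>m (d i) (d i))"
  using theI'[OF reps_unique[of "\<lambda>i. if i = j then 1\<^sub>m (d i) else 0\<^sub>m (d i) (d i)"]]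
  unfolding block_idempotent_def by auto

lemma block_idempotent_central: "block_idempotent j * h = h * block_idempotent j"
proof (rule reps_eqI)
  fix i assume "i \<in> \<Lambda>"
  then show "\<rho> i (block_idempotent j * h) = \<rho> i (h * block_idempotent j)"
    using rep_carrier[of i h] by (auto simp: rep_mult rep_block_idempotent)
qed

lemma block_idempotent_idem: "block_idempotent j * block_idempotent j = block_idempotent j"
  by (rule reps_eqI) (auto simp: rep_mult rep_block_idempotent)

lemma character_mult_block_idempotent:
  "i \<in> \<Lambda> \<Longrightarrow> character \<rho> i (block_idempotent j * x) = (if i = j then character \<rho> j x else 0)"
  using rep_carrier[of i x]
  by (auto simp: character_def mat_trace_def rep_mult rep_block_idempotent)

lemma character_block_idempotent: "j \<in> \<Lambda> \<Longrightarrow> character \<rho> j (block_idempotent j) = of_nat (d j)"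
  by (simp add: character_def mat_trace_def rep_block_idempotent)

lemma character_eq_trace_block_idempotent:
  assumes "j \<in> \<Lambda>"
  shows "character \<rho> j x = c j * \<tau> (block_idempotent j * x)"
proof -
  have "\<tau> (block_idempotent j * x) = (\<Sum>i\<in>\<Lambda>. if i = j then inverse (c j) * character \<rho> j x else 0)"
    unfolding trace_schur by (rule sum.cong) (auto simp: character_mult_block_idempotent)
  then show ?thesis using assms finite_reps schur_nonzero by simp
qed

lemma character_star:
  assumes anisotropic: "\<And>h. \<tau> (h * st h) = 0 \<Longrightarrow> h = 0" and "j \<in> \<Lambda>"
  shows "character \<rho> j (st h) = character \<rho> j h"
proof -
  have e: "st (block_idempotent j) = block_idempotent j"
    using star_central_idempotent[OF anisotropic block_idempotent_central block_idempotent_idem] .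
  have "\<tau> (block_idempotent j * st h) = \<tau> (block_idempotent j * h)"
    using trace_star[of "h * block_idempotent j"] by (simp add: star_mult e block_idempotent_central)
  then show ?thesis using character_eq_trace_block_idempotent[OF assms(2)] by metis
qed

lemma sum_squares_character:
  assumes anisotropic: "\<And>h. \<tau> (h * st h) = 0 \<Longrightarrow> h = 0" and j: "j \<in> \<Lambda>"
  shows "(\<Sum>v\<in>B. character \<rho> j v ^ 2) = of_nat (d j) * c j"
proof -
  let ?e = "block_idempotent j"
  have "of_nat (d j) = character \<rho> j (\<Sum>v\<in>B. sc (\<tau> (?e * st v)) v)"
    using character_block_idempotent[OF j] basis_expansion[of ?e] by simp
  also have "\<dots> = (\<Sum>v\<in>B. \<tau> (?e * st v) * character \<rho> j v)"
    by (simp add: character_sum character_scale j)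
  also have "\<dots> = (\<Sum>v\<in>B. inverse (c j) * character \<rho> j v ^ 2)"
    using character_eq_trace_block_idempotent[OF j] character_star[OF anisotropic j] schur_nonzero[OF j]
    by (intro sum.cong) (auto simp: power2_eq_square)
  also have "\<dots> = inverse (c j) * (\<Sum>v\<in>B. character \<rho> j v ^ 2)"
    by (simp add: sum_distrib_left)
  finally show ?thesis using schur_nonzero[OF j] by (simp add: field_simps)
qed

end

lemma (in schur_algebra) schur_element_valuation:
  assumes "formally_real_valuation \<nu>" and j: "j \<in> \<Lambda>"
  shows "\<forall>x\<in>B. character \<rho> j x \<noteq> 0 \<longrightarrow>
           \<nu> (c j) \<le> \<nu> (character \<rho> j x) + \<nu> (character \<rho> j x)"
    and "\<exists>x\<in>B. character \<rho> j x \<noteq> 0 \<and>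
           \<nu> (character \<rho> j x) + \<nu> (character \<rho> j x) = \<nu> (c j)"
proof -
  interpret formally_real_valuation \<nu> by fact
  have "\<And>h. \<tau> (h * st h) = 0 \<Longrightarrow> h = 0"
    using star_symmetric_algebra_anisotropic star_symmetric_algebra_axioms by blast
  note sum_sq = sum_squares_character[OF this j]
  have dim: "of_nat (d j) \<noteq> (0::'k)" "\<nu> (of_nat (d j) :: 'k) = 0"
    using of_nat_valuation dim_pos[OF j] by auto
  then have val: "\<nu> (\<Sum>v\<in>B. character \<rho> j v ^ 2) = \<nu> (c j)"
    using sum_sq valuation_mult schur_nonzero[OF j] by simp
  have "\<exists>v\<in>B. character \<rho> j v \<noteq> 0"
  proof (rule ccontr)
    assume "\<not> ?thesis"
    then have "(\<Sum>v\<in>B. character \<rho> j v ^ 2) = 0" by simp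
    then show False using sum_sq dim schur_nonzero[OF j] by simp
  qed
  from sum_squares_valuation_min(2,3)[OF finite_basis this] val
  show "\<forall>x\<in>B. character \<rho> j x \<noteq> 0 \<longrightarrow>
          \<nu> (c j) \<le> \<nu> (character \<rho> j x) + \<nu> (character \<rho> j x)"
    and "\<exists>x\<in>B. character \<rho> j x \<noteq> 0 \<and>
          \<nu> (character \<rho> j x) + \<nu> (character \<rho> j x) = \<nu> (c j)"
    by simp_all
qed

theorem mainTheorem6:
  fixes \<nu> :: "'k::field \<Rightarrow> 'g::linordered_ab_group_add"
    and sc :: "'k \<Rightarrow> 'h::ring_1 \<Rightarrow> 'h"
    and \<Lambda> :: "'l set" and d :: "'l \<Rightarrow> nat" and \<rho> :: "'l \<Rightarrow> 'h \<Rightarrow> 'k mat"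
    and \<tau> :: "'h \<Rightarrow> 'k" and c :: "'l \<Rightarrow> 'k"
    and st :: "'h \<Rightarrow> 'h" and B :: "'h set"
  assumes "is_surj_valuation \<nu>"
    and "formally_real_residue \<nu>"
    and "is_algebra sc"
    and "split_semisimple_reps sc \<Lambda> d \<rho>"
    and "symmetrizing_trace sc \<tau>"
    and "schur_elements \<Lambda> \<rho> \<tau> c"
    and "linear_involutive_antiaut sc st"
    and "star_symmetric_basis sc \<tau> st B"
  shows "\<forall>j\<in>\<Lambda>.
           (\<forall>h. character \<rho> j h = character \<rho> j (st h)) \<and>
           (\<forall>x\<in>B. character \<rho> j x \<noteq> 0 \<longrightarrow>
                   \<nu> (c j) \<le> \<nu> (character \<rho> j x) + \<nu> (character \<rho> j x)) \<and>
           (\<exists>x\<in>B. character \<rho> j x \<noteq> 0 \<and>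
                   \<nu> (character \<rho> j x) + \<nu> (character \<rho> j x) = \<nu> (c j))"
proof -
  interpret valuation: formally_real_valuation \<nu> using assms(1,2) by unfold_locales
  interpret schur_algebra sc \<tau> st B \<Lambda> d \<rho> c using assms(3-8) by unfold_locales
  have "\<And>h. \<tau> (h * st h) = 0 \<Longrightarrow> h = 0"
    using valuation.star_symmetric_algebra_anisotropic star_symmetric_algebra_axioms by blast
  then show ?thesis
    using character_star schur_element_valuation[OF valuation.formally_real_valuation_axioms]
    by auto
qed

end
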